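(* Let $\mathcal{X},\mathcal{Y}$ be Hilbert spaces, $F:\mathcal{D}(F)\subset\mathcal{X}\to\mathcal{Y}$ an operator and $y\in\mathcal{Y}$. Assume: (a) $\Theta:\mathcal{X}\to(-\infty,\infty]$ is proper, weakly lower semi-continuous and $p$-convex for some $p>1$, i.e. there is $c_0>0$ with $D_\xi\Theta(\bar x,x)\ge c_0\|x-\bar x\|^p$ for all $\bar x\in\mathcal{D}(\Theta)$, $x\in\mathcal{D}(\partial\Theta)$, $\xi\in\partial\Theta(x)$; (b) there are $\rho>0$, $x_0\in\mathcal{X}$, $\xi_0\in\partial\Theta(x_0)$ with $B_{2\rho}(x_0)\subset\mathcal{D}(F)$, and $F(x)=y$ has a solution $x^*\in\mathcal{D}(\Theta)$ with $D_{\xi_0}\Theta(x^*,x_0)\le c_0\rho^p$; (c) $F$ is continuous and weakly closed on $\mathcal{D}(F)$; (d) there is a family of bounded linear operators $\{L(x):\mathcal{X}\to\mathcal{Y}\}_{x\in B_{2\rho}(x_0)\cap\mathcal{D}(\Theta)}$, with $x\mapsto L(x)$ continuous on $B_{2\rho}(x_0)\cap\mathcal{D}(\Theta)$, a number $0\le\eta<1$ with $\|F(x)-F(\bar x)-L(\bar x)(x-\bar x)\|<\eta\|F(x)-F(\bar x)\|$ for all $x,\bar x\in B_{2\rho}(x_0)\cap\mathcal{D}(\Theta)$, and $C_0>0$ with $\|L(x)\|\le C_0$ for all $x\in B_{2\rho}(x_0)$. Let $(\xi(t),x(t))$, $t\ge0$, be the solution of the noise-free problem $$\frac{d\xi(t)}{dt}=-L(x(t))^*(F(x(t))-y),\quad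 x(t)=\nabla\Theta^*(\xi(t)),\qquad \xi(0)=\xi_0,\ x(0)=x_0.$$ Then there exists a solution $\bar x\in B_{2\rho}(x_0)\cap\mathcal{D}(\Theta)$ of $F(x)=y$ such that $\lim_{T\to\infty}\|x(T)-\bar x\|=0$.
   Context: $\partial\Theta$ is the subdifferential, $\mathcal{D}(\Theta)=\{x:\Theta(x)<\infty\}$, $\mathcal{D}(\partial\Theta)=\{x\in\mathcal{D}(\Theta):\partial\Theta(x)\ne\emptyset\}$, and $D_\xi\Theta(\bar x,x)=\Theta(\bar x)-\Theta(x)-\langle\xi,\bar x-x\rangle$ for $\xi\in\partial\Theta(x)$ is the Bregman distance. $\Theta^*$ is the Legendre–Fenchel conjugate of $\Theta$, $L(x)^*$ the adjoint, and $B_{2\rho}(x_0)$ the closed ball of radius $2\rho$ about $x_0$. *)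

theory Defs
  imports "HOL-Analysis.Analysis" "HOL-Library.Extended_Real"
begin

definition weak_conv :: "(nat \<Rightarrow> 'a::real_inner) \<Rightarrow> 'a \<Rightarrow> bool" where
  "weak_conv xs x \<longleftrightarrow> (\<forall>v. (\<lambda>n. inner (xs n) v) \<longlonglongrightarrow> inner x v)"

definition edom :: "('a \<Rightarrow> ereal) \<Rightarrow> 'a set" where
  "edom \<Theta> = {x. \<Theta> x < \<infinity>}"

definition proper_fun :: "('a \<Rightarrow> ereal) \<Rightarrow> bool" where
  "proper_fun \<Theta> \<longleftrightarrow> (\<forall>x. \<Theta> x \<noteq> -\<infinity>) \<and> (\<exists>x. \<Theta> x < \<infinity>)"

definition weakly_lsc :: "('a::real_inner \<Rightarrow> ereal) \<Rightarrow> bool" where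
  "weakly_lsc \<Theta> \<longleftrightarrow>
     (\<forall>xs x. weak_conv xs x \<longrightarrow> \<Theta> x \<le> liminf (\<lambda>n. \<Theta> (xs n)))"

definition subdiff :: "('a::real_inner \<Rightarrow> ereal) \<Rightarrow> 'a \<Rightarrow> 'a set" where
  "subdiff \<Theta> x = {\<xi>. \<Theta> x < \<infinity> \<and>
      (\<forall>z. \<Theta> x + ereal (inner \<xi> (z - x)) \<le> \<Theta> z)}"

definition dom_subdiff :: "('a::real_inner \<Rightarrow> ereal) \<Rightarrow> 'a set" where
  "dom_subdiff \<Theta> = {x \<in> edom \<Theta>. subdiff \<Theta> x \<noteq> {}}"

text \<open>Bregman distance D_xi Theta(xb, x); used only when both values are finite.\<close>
definition bregman :: "('a::real_inner \<Rightarrow> ereal) \<Rightarrow> 'a \<Rightarrow> 'a \<Rightarrow> 'a \<Rightarrow> real" where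
  "bregman \<Theta> \<xi> xb x = real_of_ereal (\<Theta> xb) - real_of_ereal (\<Theta> x) - inner \<xi> (xb - x)"

definition fconj :: "('a::real_inner \<Rightarrow> ereal) \<Rightarrow> 'a \<Rightarrow> ereal" where
  "fconj \<Theta> \<xi> = (SUP z. ereal (inner \<xi> z) - \<Theta> z)"

definition p_convex :: "('a::real_inner \<Rightarrow> ereal) \<Rightarrow> real \<Rightarrow> real \<Rightarrow> bool" where
  "p_convex \<Theta> p c0 \<longleftrightarrow>
     (\<forall>xb\<in>edom \<Theta>. \<forall>x\<in>dom_subdiff \<Theta>. \<forall>\<xi>\<in>subdiff \<Theta> x.
        bregman \<Theta> \<xi> xb x \<ge> c0 * norm (x - xb) powr p)"

definition weakly_closed_op :: "'a::real_inner set \<Rightarrow> ('a \<Rightarrow> 'b::real_inner) \<Rightarrow> bool" where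
  "weakly_closed_op D F \<longleftrightarrow>
     (\<forall>xs x v. (\<forall>n. xs n \<in> D) \<and> weak_conv xs x \<and> weak_conv (\<lambda>n. F (xs n)) v
         \<longrightarrow> x \<in> D \<and> F x = v)"

end

theory Submission
  imports Defs
begin

(* The Bregman distance D(t) = D_xi(t) Theta(x^*, x(t)) is a Lyapunov function of the flow: the
   tangential cone condition gives D' <= -(1 - eta) |F(x) - y|^2, which also keeps x(t) in the
   ball B_2rho(x0). By p-convexity and the three-point identity for Bregman distances,
   |x(t) - x(s)|^p is bounded by a multiple of D(t) - D(s) once both times are compared with an
   intermediate time of minimal residual, so x(t) is Cauchy.
   Since D(t) + (1 - eta) ln t cannot decrease forever, there are arbitrarily late times tau with
   tau |F(x(tau)) - y|^2 <= 1; along them the residual vanishes and Theta(x(tau)) stays bounded,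
   so the limit solves F x = y and lies in dom Theta. The Riesz representation is needed to give
   the adjoint in the flow equation its defining property. *)

section \<open>Riesz representation\<close>

lemma parallelogram_law:
  fixes u v :: "'a::real_inner"
  shows "(norm (u + v))\<^sup>2 + (norm (u - v))\<^sup>2 = 2 * (norm u)\<^sup>2 + 2 * (norm v)\<^sup>2"
  by (simp add: power2_norm_eq_inner inner_add_left inner_add_right inner_diff_left
      inner_diff_right inner_commute)

lemma minimizing_sequence_Cauchy:
  fixes S :: "'a::real_inner set"
  assumes S: "convex S" and zs_in: "\<And>k. zs k \<in> S"
    and d: "0 \<le> d" "\<And>z. z \<in> S \<Longrightarrow> d \<le> dist a z"
    and zs_close: "\<And>k. (dist a (zs k))\<^sup>2 < d\<^sup>2 + 1 / (real k + 1)"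
  shows "Cauchy zs"
proof (rule metric_CauchyI)
  have zs_spread: "(dist (zs k) (zs j))\<^sup>2 \<le> 2 / (real k + 1) + 2 / (real j + 1)" for k j
  proof -
    have "midpoint (zs k) (zs j) \<in> S"
      using S zs_in midpoint_in_closed_segment unfolding convex_contains_segment by blast
    then have "(2 * d)\<^sup>2 \<le> (2 * dist a (midpoint (zs k) (zs j)))\<^sup>2"
      using d by (simp add: power_mono)
    also have "2 * dist a (midpoint (zs k) (zs j)) = norm ((a - zs k) + (a - zs j))"
    proof -
      have "(a - zs k) + (a - zs j) = 2 *\<^sub>R (a - midpoint (zs k) (zs j))"
        by (simp add: midpoint_def scaleR_add_right scaleR_diff_right scaleR_2)
      then show ?thesis by (simp add: dist_norm)
    qed
    finally show ?thesis
      using parallelogram_law[of "a - zs k" "a - zs j"] zs_close[of k] zs_close[of j]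
      by (simp add: dist_norm norm_minus_commute power_mult_distrib)
  qed
  fix e :: real
  assume e: "e > 0"
  obtain M :: nat where M: "4 / e\<^sup>2 < real M + 1"
    using reals_Archimedean2 by (metis add.commute less_add_same_cancel2 less_trans zero_less_one)
  have "dist (zs k) (zs j) < e" if "k \<ge> M" "j \<ge> M" for k j
  proof -
    have "2 / (real k + 1) \<le> 2 / (real M + 1)" "2 / (real j + 1) \<le> 2 / (real M + 1)"
      using that by (simp_all add: frac_le)
    then have "2 / (real k + 1) + 2 / (real j + 1) \<le> 4 / (real M + 1)" by simp
    also have "\<dots> < e\<^sup>2" using M e by (simp add: field_simps)
    finally have "(dist (zs k) (zs j))\<^sup>2 < e\<^sup>2"
      using zs_spread[of k j] by linarith
    then show ?thesis by (rule power_less_imp_less_base) (use e in simp)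
  qed
  then show "\<exists>M. \<forall>m\<ge>M. \<forall>n\<ge>M. dist (zs m) (zs n) < e" by blast
qed

lemma nearest_point_exists:
  fixes S :: "'a::{real_inner,complete_space} set"
  assumes S: "closed S" "convex S" "S \<noteq> {}"
  obtains w where "w \<in> S" "\<And>z. z \<in> S \<Longrightarrow> dist a w \<le> dist a z"
proof -
  define d where "d = infdist a S"
  have d: "0 \<le> d" "\<And>z. z \<in> S \<Longrightarrow> d \<le> dist a z"
    by (simp_all add: d_def infdist_nonneg infdist_le)
  have "\<exists>z\<in>S. (dist a z)\<^sup>2 < d\<^sup>2 + 1 / (real k + 1)" for k :: nat
  proof -
    define y where "y = d\<^sup>2 + 1 / (real k + 1)"
    have "d < sqrt y" by (intro real_less_rsqrt) (simp add: y_def)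
    then obtain z where z: "z \<in> S" "dist a z < sqrt y"
      using cInf_lessD[of "dist a ` S"] S(3) by (auto simp: d_def infdist_notempty)
    then have "(dist a z)\<^sup>2 < (sqrt y)\<^sup>2" by (intro power_strict_mono) auto
    also have "\<dots> = y" by (simp add: y_def)
    finally show ?thesis using z(1) unfolding y_def by blast
  qed
  then obtain zs where zs_in: "\<And>k. zs k \<in> S"
    and zs_close: "\<And>k. (dist a (zs k))\<^sup>2 < d\<^sup>2 + 1 / (real k + 1)"
    by metis
  obtain w where lim: "zs \<longlonglongrightarrow> w"
    using minimizing_sequence_Cauchy[OF S(2) zs_in d zs_close] convergent_eq_Cauchy by blast
  have "(dist a w)\<^sup>2 \<le> d\<^sup>2"
  proof (rule tendsto_le[OF _ _ _ always_eventually])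
    show "(\<lambda>k. d\<^sup>2 + 1 / (real k + 1)) \<longlonglongrightarrow> d\<^sup>2"
      using tendsto_add[OF tendsto_const LIMSEQ_inverse_real_of_nat]
      by (simp add: inverse_eq_divide add.commute)
    show "(\<lambda>k. (dist a (zs k))\<^sup>2) \<longlonglongrightarrow> (dist a w)\<^sup>2"
      by (intro tendsto_intros lim)
    show "\<forall>k. (dist a (zs k))\<^sup>2 \<le> d\<^sup>2 + 1 / (real k + 1)"
      using zs_close by (simp add: less_imp_le)
  qed simp
  then have "dist a w \<le> d"
    by (rule power2_le_imp_le) (simp add: d)
  then have "dist a w \<le> dist a z" if "z \<in> S" for z
    using d(2)[OF that] by linarith
  moreover have "w \<in> S" using S(1) zs_in lim by (meson closed_sequentially)
  ultimately show ?thesis using that by blast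
qed

lemma nearest_point_subspace_orthogonal:
  fixes N :: "'a::real_inner set"
  assumes N: "subspace N" and w: "w \<in> N"
    and nearest: "\<And>z. z \<in> N \<Longrightarrow> norm (a - w) \<le> norm (a - z)"
    and n: "n \<in> N"
  shows "inner (a - w) n = 0"
proof (cases "n = 0")
  case False
  define u c m where "u = a - w" and "c = inner u n" and "m = (norm n)\<^sup>2"
  define t where "t = c / m"
  have m: "m > 0" using False by (simp add: m_def)
  have "w + t *\<^sub>R n \<in> N" using N w n by (simp add: subspace_add subspace_scale)
  then have "norm u \<le> norm (u - t *\<^sub>R n)"
    using nearest by (simp add: u_def diff_diff_eq)
  then have "(norm u)\<^sup>2 \<le> (norm (u - t *\<^sub>R n))\<^sup>2"
    by (simp add: power_mono)
  also have "\<dots> = (norm u)\<^sup>2 - 2 * t * c + t\<^sup>2 * m"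
    unfolding c_def m_def power2_norm_eq_inner
    by (simp add: inner_diff_left inner_diff_right inner_commute algebra_simps power2_eq_square)
  also have "\<dots> = (norm u)\<^sup>2 - c\<^sup>2 / m"
    using m by (simp add: t_def field_simps power2_eq_square)
  finally show ?thesis using m by (simp add: u_def c_def divide_le_0_iff)
qed simp

lemma riesz_representation:
  fixes g :: "'a::{real_inner,complete_space} \<Rightarrow> real"
  assumes "bounded_linear g"
  obtains v where "\<And>z. g z = inner v z"
proof (cases "\<forall>z. g z = 0")
  case True
  then show ?thesis using that[of 0] by simp
next
  case False
  interpret g: bounded_linear g by fact
  obtain a where ga: "g a \<noteq> 0" using False by blast
  define N where "N = {z. g z = 0}"
  have "subspace N"
    by (simp add: N_def subspace_def g.add g.scale)
  moreover have "closed N"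
    unfolding N_def by (intro closed_Collect_eq g.continuous_on continuous_on_id continuous_on_const)
  moreover have "convex N" "N \<noteq> {}"
    using \<open>subspace N\<close> subspace_0 by (auto simp: subspace_imp_convex)
  ultimately obtain w where w: "w \<in> N" "\<And>z. z \<in> N \<Longrightarrow> norm (a - w) \<le> norm (a - z)"
    using nearest_point_exists[of N a] unfolding dist_norm by blast
  define u where "u = a - w"
  have orth: "inner u n = 0" if "n \<in> N" for n
    unfolding u_def using \<open>subspace N\<close> w that by (rule nearest_point_subspace_orthogonal)
  have gu: "g u = g a" using w by (simp add: u_def g.diff N_def)
  have "g z = inner ((g u / (norm u)\<^sup>2) *\<^sub>R u) z" for z
  proof -
    have "z - (g z / g u) *\<^sub>R u \<in> N" using ga gu by (simp add: N_def g.diff g.scale)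
    then have "inner u z = (g z / g u) * (norm u)\<^sup>2"
      using orth[OF \<open>z - _ \<in> N\<close>] by (simp add: inner_diff_right power2_norm_eq_inner)
    then show ?thesis using ga gu by (auto simp: field_simps)
  qed
  then show ?thesis by (rule that)
qed

lemma adjoint_inner:
  fixes T :: "'a::{real_inner,complete_space} \<Rightarrow> 'b::real_inner"
  assumes "bounded_linear T"
  shows "inner (T x) y = inner x (adjoint T y)"
proof -
  have "\<exists>v. \<forall>x. inner (T x) y = inner v x" for y
    using riesz_representation[OF bounded_linear_compose[OF bounded_linear_inner_left assms]]
    by metis
  then obtain h where h: "\<And>y x. inner (T x) y = inner (h y) x" by metis
  then have "adjoint T = h" by (intro adjoint_unique) (simp add: inner_commute)
  then show ?thesis using h by (simp add: inner_commute)
qed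

section \<open>Conjugates of \<open>p\<close>-convex functionals\<close>

lemma weak_conv_if_tendsto:
  "xs \<longlonglongrightarrow> x \<Longrightarrow> weak_conv xs x"
  unfolding weak_conv_def by (intro allI tendsto_inner tendsto_const)

lemma proper_funE:
  assumes "proper_fun \<Theta>"
  obtains v where "\<Theta> z = ereal v" | "\<Theta> z = \<infinity>"
  using assms unfolding proper_fun_def by (cases "\<Theta> z") auto

lemma p_convex_bregman_bound:
  assumes "p_convex \<Theta> p c0" and "proper_fun \<Theta>"
    and "\<xi> \<in> subdiff \<Theta> x" and "\<Theta> z = ereal v"
  shows "c0 * norm (x - z) powr p \<le> v - real_of_ereal (\<Theta> x) - inner \<xi> (z - x)"
proof -
  have "x \<in> dom_subdiff \<Theta>" "z \<in> edom \<Theta>"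
    using assms(3,4) by (auto simp: dom_subdiff_def edom_def subdiff_def)
  then show ?thesis
    using assms unfolding p_convex_def bregman_def by force
qed

lemma linear_minus_powr_bounded_above:
  fixes a c p :: real
  assumes "c > 0" and "p > 1"
  obtains M where "\<And>s. s \<ge> 0 \<Longrightarrow> a * s - c * s powr p \<le> M"
proof -
  define R where "R = max 1 ((\<bar>a\<bar> / c) powr (1 / (p - 1)))"
  have "a * s - c * s powr p \<le> \<bar>a\<bar> * R" if s: "s \<ge> 0" for s
  proof (cases "s \<le> R")
    case True
    then have "a * s \<le> \<bar>a\<bar> * R"
      by (metis abs_ge_self mult_mono abs_ge_zero order_trans s)
    moreover have "c * s powr p \<ge> 0" using assms by simp
    ultimately show ?thesis by linarith
  next
    case False
    then have s1: "s > 1" and "(\<bar>a\<bar> / c) powr (1 / (p - 1)) \<le> s"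
      by (auto simp: R_def)
    then have "((\<bar>a\<bar> / c) powr (1 / (p - 1))) powr (p - 1) \<le> s powr (p - 1)"
      using assms by (intro powr_mono2) auto
    then have "\<bar>a\<bar> / c \<le> s powr (p - 1)"
      using assms by (cases "a = 0") (auto simp: powr_powr)
    then have "\<bar>a\<bar> * s \<le> c * s powr (p - 1) * s"
      using assms s1 by (intro mult_right_mono) (auto simp: field_simps)
    also have "\<dots> = c * s powr p"
      using s1 by (simp add: powr_diff)
    finally have "\<bar>a\<bar> * s \<le> c * s powr p" .
    moreover have "a * s \<le> \<bar>a\<bar> * s" using s by (simp add: mult_right_mono)
    moreover have "\<bar>a\<bar> * R \<ge> 0" by (simp add: R_def)
    ultimately show ?thesis by linarith
  qed
  then show ?thesis using that by blast
qed

text \<open>By \<open>p\<close>-convexity, \<open>\<Theta>\<close> grows at least like \<open>c0 \<parallel>z - x0\<parallel>\<^sup>p\<close>, which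
  dominates every affine function.\<close>

lemma fconj_finite:
  assumes proper: "proper_fun \<Theta>" and pconv: "p_convex \<Theta> p c0"
    and p: "p > 1" and c0: "c0 > 0" and sub: "\<xi>0 \<in> subdiff \<Theta> x0"
  shows "\<bar>fconj \<Theta> \<zeta>\<bar> \<noteq> \<infinity>"
proof -
  obtain M where M: "\<And>s. s \<ge> 0 \<Longrightarrow> norm (\<zeta> - \<xi>0) * s - c0 * s powr p \<le> M"
    using linear_minus_powr_bounded_above[OF c0 p] by blast
  define th0 where "th0 = real_of_ereal (\<Theta> x0)"
  have "ereal (inner \<zeta> z) - \<Theta> z \<le> ereal (M + inner \<zeta> x0 - th0)" for z
  proof (cases rule: proper_funE[OF proper, of z])
    case (1 v)
    have "inner \<zeta> z - v \<le> inner (\<zeta> - \<xi>0) (z - x0) - c0 * norm (z - x0) powr p + inner \<zeta> x0 - th0"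
      using p_convex_bregman_bound[OF pconv proper sub 1]
      by (simp add: th0_def norm_minus_commute inner_diff_left inner_diff_right)
    also have "\<dots> \<le> M + inner \<zeta> x0 - th0"
      using Cauchy_Schwarz_ineq2[of "\<zeta> - \<xi>0" "z - x0"] M[of "norm (z - x0)"] by simp
    finally show ?thesis using 1 by simp
  qed simp
  then have "fconj \<Theta> \<zeta> \<le> ereal (M + inner \<zeta> x0 - th0)"
    unfolding fconj_def by (intro SUP_least)
  moreover obtain z1 where "\<Theta> z1 < \<infinity>" using proper unfolding proper_fun_def by auto
  then obtain v where "\<Theta> z1 = ereal v" using proper_funE[OF proper, of z1] by force
  moreover have "ereal (inner \<zeta> z1) - \<Theta> z1 \<le> fconj \<Theta> \<zeta>"
    unfolding fconj_def by (intro SUP_upper) auto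
  ultimately show ?thesis by auto
qed

lemma fenchel_young:
  assumes "\<Theta> z = ereal v" and "\<bar>fconj \<Theta> \<zeta>\<bar> \<noteq> \<infinity>"
  shows "inner \<zeta> z - v \<le> real_of_ereal (fconj \<Theta> \<zeta>)"
proof -
  have "ereal (inner \<zeta> z) - \<Theta> z \<le> fconj \<Theta> \<zeta>"
    unfolding fconj_def by (intro SUP_upper) auto
  then show ?thesis using assms by (cases "fconj \<Theta> \<zeta>") auto
qed

lemma fconj_near_maximizer:
  assumes "proper_fun \<Theta>" and "\<bar>fconj \<Theta> \<zeta>\<bar> \<noteq> \<infinity>" and "e > 0"
  obtains z v where "\<Theta> z = ereal v" "real_of_ereal (fconj \<Theta> \<zeta>) - e < inner \<zeta> z - v"
proof -
  have "ereal (real_of_ereal (fconj \<Theta> \<zeta>) - e) < fconj \<Theta> \<zeta>"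
    using assms(2,3) by (cases "fconj \<Theta> \<zeta>") auto
  then obtain z where z: "ereal (real_of_ereal (fconj \<Theta> \<zeta>) - e) < ereal (inner \<zeta> z) - \<Theta> z"
    unfolding fconj_def less_SUP_iff by auto
  with assms(1) show ?thesis
    by (cases rule: proper_funE[of \<Theta> z]) (auto intro: that)
qed

text \<open>If \<open>\<Theta>\<^sup>*\<close> is differentiable at \<open>\<zeta>\<close> with gradient \<open>v\<close>, then every near-maximizer in the
  supremum defining \<open>\<Theta>\<^sup>* \<zeta>\<close> is close to \<open>v\<close>: test the Fenchel--Young inequality at
  \<open>\<zeta> + h\<close> with \<open>h\<close> pointing from \<open>v\<close> towards the near-maximizer.\<close>

lemma fconj_near_maximizers_near_gradient:
  assumes fin: "\<And>\<zeta>. \<bar>fconj \<Theta> \<zeta>\<bar> \<noteq> \<infinity>"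
    and D: "((\<lambda>\<zeta>. real_of_ereal (fconj \<Theta> \<zeta>)) has_derivative inner v) (at \<zeta>)"
    and e: "e > 0"
  obtains \<delta> where "\<delta> > 0"
    "\<And>z w. \<Theta> z = ereal w \<Longrightarrow> real_of_ereal (fconj \<Theta> \<zeta>) - \<delta> < inner \<zeta> z - w
       \<Longrightarrow> norm (z - v) < e"
proof -
  define fc where "fc \<zeta> = real_of_ereal (fconj \<Theta> \<zeta>)" for \<zeta>
  obtain d where d: "d > 0" and H: "\<And>y. norm (y - \<zeta>) < d \<Longrightarrow>
      norm (fc y - fc \<zeta> - inner v (y - \<zeta>)) \<le> (e / 2) * norm (y - \<zeta>)"
    using D e unfolding has_derivative_at_alt fc_def by (meson half_gt_zero)
  have "norm (z - v) < e"
    if z: "\<Theta> z = ereal w" and gap: "fc \<zeta> - e * d / 4 < inner \<zeta> z - w" for z w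
  proof (cases "z = v")
    case False
    define q where "q = norm (z - v)"
    define h where "h = (d / 2 / q) *\<^sub>R (z - v)"
    have q: "q > 0" using False by (simp add: q_def)
    have nh: "norm h = d / 2" using q d by (simp add: h_def q_def)
    have "\<bar>fc (\<zeta> + h) - fc \<zeta> - inner v h\<bar> \<le> e / 2 * (d / 2)"
      using H[of "\<zeta> + h"] nh d by simp
    then have "fc (\<zeta> + h) - fc \<zeta> - inner v h \<le> e / 2 * (d / 2)"
      by linarith
    moreover have "inner (\<zeta> + h) z - w \<le> fc (\<zeta> + h)"
      using fenchel_young[OF z fin] by (simp add: fc_def)
    moreover have "inner h (z - v) = d / 2 * q"
      using q by (simp add: h_def q_def dot_square_norm power2_eq_square)
    ultimately have "d / 2 * q < d / 2 * e"
      using gap by (simp add: inner_add_left inner_diff_right inner_commute algebra_simps)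
    then show ?thesis using d by (simp add: q_def)
  qed (use e in simp)
  then show ?thesis using that[of "e * d / 4"] e d by (simp add: fc_def)
qed

lemma fconj_near_maximizers_tendsto_gradient:
  assumes fin: "\<And>\<zeta>. \<bar>fconj \<Theta> \<zeta>\<bar> \<noteq> \<infinity>"
    and D: "((\<lambda>\<zeta>. real_of_ereal (fconj \<Theta> \<zeta>)) has_derivative inner v) (at \<zeta>)"
    and zs: "\<And>n. \<Theta> (zs n) = ereal (ws n)"
    and gap: "\<And>n. real_of_ereal (fconj \<Theta> \<zeta>) - 1 / (real n + 1) < inner \<zeta> (zs n) - ws n"
  shows "zs \<longlonglongrightarrow> v"
proof (rule LIMSEQ_I)
  fix e :: real
  assume "e > 0"
  then obtain \<delta> where \<delta>: "\<delta> > 0" and near: "\<And>z w. \<Theta> z = ereal w \<Longrightarrow>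
      real_of_ereal (fconj \<Theta> \<zeta>) - \<delta> < inner \<zeta> z - w \<Longrightarrow> norm (z - v) < e"
    using fconj_near_maximizers_near_gradient[OF fin D] by metis
  have inv: "(\<lambda>n. 1 / (real n + 1)) \<longlonglongrightarrow> 0"
    using LIMSEQ_inverse_real_of_nat by (simp add: inverse_eq_divide add.commute)
  obtain N where N: "\<And>n. n \<ge> N \<Longrightarrow> 1 / (real n + 1) < \<delta>"
    using order_tendstoD(2)[OF inv \<delta>] unfolding eventually_sequentially by blast
  have "norm (zs n - v) < e" if "n \<ge> N" for n
    by (rule near[OF zs]) (use gap[of n] N[OF that] in linarith)
  then show "\<exists>N. \<forall>n\<ge>N. norm (zs n - v) < e" by blast
qed

lemma fconj_gradient_value:
  assumes proper: "proper_fun \<Theta>" and lsc: "weakly_lsc \<Theta>"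
    and fin: "\<And>\<zeta>. \<bar>fconj \<Theta> \<zeta>\<bar> \<noteq> \<infinity>"
    and D: "((\<lambda>\<zeta>. real_of_ereal (fconj \<Theta> \<zeta>)) has_derivative inner v) (at \<zeta>)"
  shows "\<Theta> v = ereal (inner \<zeta> v - real_of_ereal (fconj \<Theta> \<zeta>))"
proof -
  define c where "c = real_of_ereal (fconj \<Theta> \<zeta>)"
  have "\<exists>z w. \<Theta> z = ereal w \<and> c - 1 / (real n + 1) < inner \<zeta> z - w" for n :: nat
  proof -
    have "(0::real) < 1 / (real n + 1)" by simp
    from fconj_near_maximizer[OF proper fin this] show ?thesis unfolding c_def by blast
  qed
  then obtain zs ws where zs: "\<And>n. \<Theta> (zs n) = ereal (ws n)"
    and gap: "\<And>n. c - 1 / (real n + 1) < inner \<zeta> (zs n) - ws n"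
    by metis
  have lim: "zs \<longlonglongrightarrow> v"
    by (rule fconj_near_maximizers_tendsto_gradient[OF fin D, of zs ws, OF zs])
      (use gap in \<open>simp add: c_def\<close>)
  have inv: "(\<lambda>n. 1 / (real n + 1)) \<longlonglongrightarrow> 0"
    using LIMSEQ_inverse_real_of_nat by (simp add: inverse_eq_divide add.commute)
  have "\<Theta> v \<le> liminf (\<lambda>n. \<Theta> (zs n))"
    using lsc weak_conv_if_tendsto[OF lim] unfolding weakly_lsc_def by blast
  also have "\<dots> \<le> liminf (\<lambda>n. ereal (inner \<zeta> (zs n) - c + 1 / (real n + 1)))"
  proof (intro Liminf_mono always_eventually allI)
    fix n
    show "\<Theta> (zs n) \<le> ereal (inner \<zeta> (zs n) - c + 1 / (real n + 1))"
      using gap[of n] by (simp add: zs)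
  qed
  also have "\<dots> = ereal (inner \<zeta> v - c)"
    by (intro lim_imp_Liminf trivial_limit_sequentially)
      (use tendsto_add[OF tendsto_diff[OF tendsto_inner[OF tendsto_const lim] tendsto_const] inv]
       in \<open>simp add: tendsto_ereal\<close>)
  finally have le: "\<Theta> v \<le> ereal (inner \<zeta> v - c)" .
  then obtain w where w: "\<Theta> v = ereal w" using proper_funE[OF proper, of v] by force
  then show ?thesis
    using le fenchel_young[OF w fin[of \<zeta>]] unfolding c_def by simp
qed

lemma fconj_gradient_subdiff:
  assumes proper: "proper_fun \<Theta>" and lsc: "weakly_lsc \<Theta>"
    and fin: "\<And>\<zeta>. \<bar>fconj \<Theta> \<zeta>\<bar> \<noteq> \<infinity>"
    and D: "((\<lambda>\<zeta>. real_of_ereal (fconj \<Theta> \<zeta>)) has_derivative inner v) (at \<zeta>)"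
  shows "\<zeta> \<in> subdiff \<Theta> v"
  unfolding subdiff_def
proof (intro CollectI conjI allI)
  note eq = fconj_gradient_value[OF proper lsc fin D]
  show "\<Theta> v < \<infinity>" using eq by simp
  fix z
  show "\<Theta> v + ereal (inner \<zeta> (z - v)) \<le> \<Theta> z"
  proof (cases rule: proper_funE[OF proper, of z])
    case (1 u)
    then show ?thesis
      using fenchel_young[OF 1 fin[of \<zeta>]] eq by (simp add: inner_diff_right)
  qed simp
qed

lemma powr_bound_imp_le_root:
  fixes u E c p :: real
  assumes "u \<ge> 0" "c > 0" "p > 0" "c * u powr p \<le> E"
  shows "u \<le> (E / c) powr (1 / p)"
proof -
  have "u powr p \<le> E / c" using assms by (simp add: field_simps)
  then have "(u powr p) powr (1 / p) \<le> (E / c) powr (1 / p)"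
    using assms by (intro powr_mono2) auto
  then show ?thesis using assms by (simp add: powr_powr)
qed

lemma nonincreasing_if_derivative_within_nonpos:
  fixes g g' :: "real \<Rightarrow> real"
  assumes ab: "a \<le> b"
    and D: "\<And>s. a \<le> s \<Longrightarrow> s \<le> b \<Longrightarrow> (g has_real_derivative g' s) (at s within {a..b})"
    and nonpos: "\<And>s. a \<le> s \<Longrightarrow> s \<le> b \<Longrightarrow> g' s \<le> 0"
  shows "g b \<le> g a"
proof (rule DERIV_nonpos_imp_decreasing_open[OF ab])
  show "continuous_on {a..b} g" by (rule DERIV_continuous_on[of _ _ g']) (use D in auto)
  fix s
  assume s: "a < s" "s < b"
  then have "at s within {a..b} = at s" by (intro at_within_interior) auto
  then show "\<exists>y. DERIV g s :> y \<and> y \<le> 0" using D[of s] nonpos[of s] s by auto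
qed

lemma abs_increment_le_if_derivative_dominated:
  fixes f f' g g' :: "real \<Rightarrow> real"
  assumes ab: "a \<le> b"
    and Df: "\<And>s. a \<le> s \<Longrightarrow> s \<le> b \<Longrightarrow> (f has_real_derivative f' s) (at s within {a..b})"
    and Dg: "\<And>s. a \<le> s \<Longrightarrow> s \<le> b \<Longrightarrow> (g has_real_derivative g' s) (at s within {a..b})"
    and dom: "\<And>s. a \<le> s \<Longrightarrow> s \<le> b \<Longrightarrow> \<bar>f' s\<bar> \<le> - g' s"
  shows "\<bar>f b - f a\<bar> \<le> g a - g b"
proof -
  have "g b + \<sigma> * f b \<le> g a + \<sigma> * f a" if "\<bar>\<sigma>\<bar> = 1" for \<sigma> :: real
  proof (rule nonincreasing_if_derivative_within_nonpos[OF ab, where g = "\<lambda>s. g s + \<sigma> * f s"])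
    fix s
    assume s: "a \<le> s" "s \<le> b"
    show "((\<lambda>s. g s + \<sigma> * f s) has_real_derivative g' s + \<sigma> * f' s) (at s within {a..b})"
      by (intro DERIV_add DERIV_cmult Dg Df s)
    have "\<sigma> * f' s \<le> \<bar>\<sigma> * f' s\<bar>" by (rule abs_ge_self)
    also have "\<dots> = \<bar>f' s\<bar>" using that by (simp add: abs_mult)
    finally have "\<sigma> * f' s \<le> \<bar>f' s\<bar>" .
    then show "g' s + \<sigma> * f' s \<le> 0" using dom[OF s] by linarith
  qed
  from this[of 1] this[of "-1"] show ?thesis by (simp add: abs_le_iff)
qed

lemma convergent_at_top_if_cauchy:
  fixes f :: "real \<Rightarrow> 'a::complete_space"
  assumes "\<And>e. e > 0 \<Longrightarrow> \<exists>T. \<forall>t\<ge>T. \<forall>s\<ge>T. dist (f t) (f s) < e"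
  obtains l where "(f \<longlongrightarrow> l) at_top"
proof -
  have "cauchy_filter (filtermap f at_top)"
    unfolding cauchy_filter_metric_filtermap
    using assms by (metis eventually_ge_at_top)
  then obtain l where "filtermap f at_top \<le> nhds l"
    using cauchy_filter_convergent convergent_filter_iff by blast
  then show ?thesis using that by (simp add: filterlim_def)
qed

section \<open>The flow\<close>

locale landweber_flow =
  fixes \<Theta> :: "'x::{real_inner,complete_space} \<Rightarrow> ereal"
    and F :: "'x \<Rightarrow> 'y::{real_inner,complete_space}"
    and DF :: "'x set" and y :: 'y
    and p c0 \<rho> \<eta> :: real and x0 \<xi>0 xstar :: 'x
    and L :: "'x \<Rightarrow> ('x \<Rightarrow>\<^sub>L 'y)"
    and \<xi> x :: "real \<Rightarrow> 'x"
  assumes proper: "proper_fun \<Theta>"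
    and lsc: "weakly_lsc \<Theta>"
    and p_gt_1: "p > 1" and c0_pos: "c0 > 0"
    and p_convex: "p_convex \<Theta> p c0"
    and rho_pos: "\<rho> > 0"
    and xi0: "\<xi>0 \<in> subdiff \<Theta> x0"
    and ball_DF: "cball x0 (2 * \<rho>) \<subseteq> DF"
    and xstar_dom: "xstar \<in> edom \<Theta>" and xstar_sol: "F xstar = y"
    and xstar_near: "bregman \<Theta> \<xi>0 xstar x0 \<le> c0 * \<rho> powr p"
    and F_cont: "continuous_on DF F"
    and eta: "0 \<le> \<eta>" "\<eta> < 1"
    and tangential_cone: "\<And>x' xb. x' \<in> cball x0 (2 * \<rho>) \<inter> edom \<Theta> \<Longrightarrow>
          xb \<in> cball x0 (2 * \<rho>) \<inter> edom \<Theta> \<Longrightarrow>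
          norm (F x' - F xb - L xb (x' - xb)) \<le> \<eta> * norm (F x' - F xb)"
    and init: "\<xi> 0 = \<xi>0" "x 0 = x0"
    and xi_ode: "\<And>t. t \<ge> 0 \<Longrightarrow>
          (\<xi> has_vector_derivative (- adjoint (blinfun_apply (L (x t))) (F (x t) - y)))
            (at t within {0..})"
    and x_grad: "\<And>t. t \<ge> 0 \<Longrightarrow>
          ((\<lambda>\<zeta>. real_of_ereal (fconj \<Theta> \<zeta>)) has_derivative (\<lambda>h. inner (x t) h)) (at (\<xi> t))"
begin

definition Theta_star :: "'x \<Rightarrow> real" where
  "Theta_star \<zeta> = real_of_ereal (fconj \<Theta> \<zeta>)"

definition residual :: "real \<Rightarrow> 'y" where
  "residual t = F (x t) - y"

definition dxi :: "real \<Rightarrow> 'x" where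
  "dxi t = - adjoint (blinfun_apply (L (x t))) (residual t)"

text \<open>For \<open>t \<ge> 0\<close> this is the Bregman distance \<open>D\<^bsub>\<xi>(t)\<^esub>\<Theta>(x\<^sup>*, x(t))\<close>
  (lemma \<open>D_eq_bregman\<close>); the conjugate form is the one that can be differentiated.\<close>

definition D :: "real \<Rightarrow> real" where
  "D t = real_of_ereal (\<Theta> xstar) + Theta_star (\<xi> t) - inner (\<xi> t) xstar"

definition K :: real where
  "K = 3 * (1 + \<eta>) / (1 - \<eta>)"

lemma K_nonneg: "K \<ge> 0" and K_eq: "K * (1 - \<eta>) = 3 * (1 + \<eta>)"
  using eta by (auto simp: K_def)

lemma fconj_finite_everywhere: "\<bar>fconj \<Theta> \<zeta>\<bar> \<noteq> \<infinity>"
  by (rule fconj_finite[OF proper p_convex p_gt_1 c0_pos xi0])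

lemma flow_value: "t \<ge> 0 \<Longrightarrow> \<Theta> (x t) = ereal (inner (\<xi> t) (x t) - Theta_star (\<xi> t))"
  using fconj_gradient_value[OF proper lsc fconj_finite_everywhere x_grad]
  by (simp add: Theta_star_def)

lemma flow_subgrad: "t \<ge> 0 \<Longrightarrow> \<xi> t \<in> subdiff \<Theta> (x t)"
  using fconj_gradient_subdiff[OF proper lsc fconj_finite_everywhere x_grad] .

lemma flow_in_dom: "t \<ge> 0 \<Longrightarrow> x t \<in> edom \<Theta>"
  using flow_value by (simp add: edom_def)

lemma flow_bregman_bound:
  assumes "s \<ge> 0" "\<Theta> z = ereal v"
  shows "c0 * norm (x s - z) powr p \<le> v + Theta_star (\<xi> s) - inner (\<xi> s) z"
  using p_convex_bregman_bound[OF p_convex proper flow_subgrad[OF assms(1)] assms(2)]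
    flow_value[OF assms(1)]
  by (simp add: inner_diff_right)

lemma Theta_xstar: "\<Theta> xstar = ereal (real_of_ereal (\<Theta> xstar))"
  using xstar_dom by (cases rule: proper_funE[OF proper, of xstar]) (auto simp: edom_def)

lemma D_eq_bregman: "t \<ge> 0 \<Longrightarrow> D t = bregman \<Theta> (\<xi> t) xstar (x t)"
  using flow_value by (simp add: D_def bregman_def inner_diff_right)

lemma D_lower: "t \<ge> 0 \<Longrightarrow> c0 * norm (x t - xstar) powr p \<le> D t"
  using flow_bregman_bound[OF _ Theta_xstar] by (simp add: D_def)

lemma D_nonneg: "t \<ge> 0 \<Longrightarrow> 0 \<le> D t"
  using D_lower c0_pos by (meson less_imp_le mult_nonneg_nonneg order_trans powr_ge_zero)

lemma D_initial: "D 0 \<le> c0 * \<rho> powr p"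
  using D_eq_bregman[of 0] init xstar_near by simp

lemma three_point:
  assumes "a \<ge> 0" "b \<ge> 0"
  shows "c0 * norm (x a - x b) powr p \<le> D a - D b + inner (\<xi> b - \<xi> a) (x b - xstar)"
  using flow_bregman_bound[OF assms(1) flow_value[OF assms(2)]]
  by (simp add: D_def inner_diff_left inner_diff_right inner_commute)

lemma x0_near_xstar: "norm (x0 - xstar) \<le> \<rho>"
proof -
  have "c0 * norm (x0 - xstar) powr p \<le> c0 * \<rho> powr p"
    using D_lower[of 0] D_initial init by simp
  then have "norm (x0 - xstar) \<le> (c0 * \<rho> powr p / c0) powr (1 / p)"
    using p_gt_1 c0_pos by (intro powr_bound_imp_le_root) auto
  then show ?thesis using p_gt_1 c0_pos rho_pos by (simp add: powr_powr)
qed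

lemma x_strongly_monotone:
  assumes "s \<ge> 0" "t \<ge> 0"
  shows "2 * c0 * norm (x s - x t) powr p \<le> norm (\<xi> s - \<xi> t) * norm (x s - x t)"
proof -
  have "inner (\<xi> t - \<xi> s) (x t - xstar) + inner (\<xi> s - \<xi> t) (x s - xstar)
      = inner (\<xi> s - \<xi> t) (x s - x t)"
    by (simp add: inner_diff_left inner_diff_right inner_commute)
  then have "2 * (c0 * norm (x s - x t) powr p) \<le> inner (\<xi> s - \<xi> t) (x s - x t)"
    using three_point[OF assms] three_point[OF assms(2,1)] by (simp add: norm_minus_commute)
  then have "2 * c0 * norm (x s - x t) powr p \<le> inner (\<xi> s - \<xi> t) (x s - x t)"
    by (simp add: mult.assoc)
  also have "\<dots> \<le> norm (\<xi> s - \<xi> t) * norm (x s - x t)" by (rule norm_cauchy_schwarz)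
  finally show ?thesis .
qed

lemma x_hoelder:
  assumes "s \<ge> 0" "t \<ge> 0"
  shows "norm (x s - x t) \<le> (norm (\<xi> s - \<xi> t) / (2 * c0)) powr (1 / (p - 1))"
proof (cases "x s = x t")
  case False
  define q where "q = norm (x s - x t)"
  have q: "q > 0" using False by (simp add: q_def)
  have "2 * c0 * q powr (p - 1) * q = 2 * c0 * q powr p"
    using q by (simp add: powr_diff)
  also have "\<dots> \<le> norm (\<xi> s - \<xi> t) * q"
    using x_strongly_monotone[OF assms] by (simp add: q_def)
  finally have "2 * c0 * q powr (p - 1) \<le> norm (\<xi> s - \<xi> t)"
    using q by simp
  then show ?thesis
    unfolding q_def using c0_pos p_gt_1 by (intro powr_bound_imp_le_root) auto
qed simp

lemma xi_continuous: "continuous_on {0..} \<xi>"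
  using xi_ode
  by (auto simp: continuous_on_eq_continuous_within intro: has_vector_derivative_continuous)

lemma x_continuous: "continuous_on {0..} x"
  unfolding continuous_on_def
proof
  fix t :: real
  assume t: "t \<in> {0..}"
  have "(\<xi> \<longlongrightarrow> \<xi> t) (at t within {0..})"
    using xi_continuous t by (simp add: continuous_on_def)
  then have "((\<lambda>s. norm (\<xi> s - \<xi> t) / (2 * c0)) \<longlongrightarrow> 0 / (2 * c0)) (at t within {0..})"
    by (intro tendsto_divide tendsto_norm_zero LIM_zero tendsto_const) (use c0_pos in simp_all)
  then have "((\<lambda>s. norm (\<xi> s - \<xi> t) / (2 * c0)) \<longlongrightarrow> 0) (at t within {0..})"
    by simp
  then have "((\<lambda>s. (norm (\<xi> s - \<xi> t) / (2 * c0)) powr (1 / (p - 1))) \<longlongrightarrow> 0)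
      (at t within {0..})"
    by (rule tendsto_zero_powrI[OF _ tendsto_const always_eventually]) (use p_gt_1 c0_pos in auto)
  moreover have "\<forall>\<^sub>F s in at t within {0..}.
      norm (x s - x t) \<le> (norm (\<xi> s - \<xi> t) / (2 * c0)) powr (1 / (p - 1))"
    unfolding eventually_at_filter by (rule always_eventually) (use x_hoelder t in simp)
  ultimately have "((\<lambda>s. x s - x t) \<longlongrightarrow> 0) (at t within {0..})"
    by (rule Lim_null_comparison[rotated])
  then show "(x \<longlongrightarrow> x t) (at t within {0..})" by (rule LIM_zero_cancel)
qed

lemma D_has_derivative:
  assumes t: "t \<ge> 0"
  shows "(D has_real_derivative inner (dxi t) (x t - xstar)) (at t within {0..})"
proof -
  have xi': "(\<xi> has_vector_derivative dxi t) (at t within {0..})"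
    using xi_ode[OF t] by (simp add: dxi_def residual_def)
  have "((Theta_star \<circ> \<xi>) has_vector_derivative inner (x t) (dxi t)) (at t within {0..})"
    by (rule vector_derivative_diff_chain_within[OF xi' has_derivative_subset
          [OF x_grad[OF t, folded Theta_star_def[abs_def]] subset_UNIV]])
  moreover have "((\<lambda>s. inner (\<xi> s) xstar) has_vector_derivative inner (dxi t) xstar)
      (at t within {0..})"
    by (rule bounded_linear.has_vector_derivative[OF bounded_linear_inner_left xi'])
  ultimately have "((\<lambda>s. real_of_ereal (\<Theta> xstar) + (Theta_star \<circ> \<xi>) s - inner (\<xi> s) xstar)
      has_vector_derivative (0 + inner (x t) (dxi t) - inner (dxi t) xstar)) (at t within {0..})"
    by (intro has_vector_derivative_diff has_vector_derivative_add has_vector_derivative_const)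
  moreover have "(\<lambda>s. real_of_ereal (\<Theta> xstar) + (Theta_star \<circ> \<xi>) s - inner (\<xi> s) xstar) = D"
    by (simp add: D_def fun_eq_iff)
  moreover have "0 + inner (x t) (dxi t) - inner (dxi t) xstar = inner (dxi t) (x t - xstar)"
    by (simp add: inner_commute[of "dxi t"] inner_diff_left)
  ultimately show ?thesis by (simp add: has_real_derivative_iff_has_vector_derivative)
qed

lemma dxi_inner: "inner (dxi t) v = - inner (residual t) (L (x t) v)"
proof -
  have "inner (L (x t) v) (residual t) = inner v (adjoint (blinfun_apply (L (x t))) (residual t))"
    by (rule adjoint_inner[OF blinfun.bounded_linear_right])
  then show ?thesis by (simp add: dxi_def inner_commute)
qed

lemma xstar_in_B: "xstar \<in> cball x0 (2 * \<rho>) \<inter> edom \<Theta>"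
  using x0_near_xstar rho_pos xstar_dom by (simp add: dist_norm)

lemma flow_in_B: "t \<ge> 0 \<Longrightarrow> x t \<in> cball x0 (2 * \<rho>) \<Longrightarrow> x t \<in> cball x0 (2 * \<rho>) \<inter> edom \<Theta>"
  using flow_in_dom by blast

lemma residual_linearization:
  assumes "s \<ge> 0" "x s \<in> cball x0 (2 * \<rho>)"
  shows "norm (residual s - L (x s) (x s - xstar)) \<le> \<eta> * norm (residual s)"
proof -
  have "norm (F xstar - F (x s) - L (x s) (xstar - x s)) \<le> \<eta> * norm (F xstar - F (x s))"
    by (rule tangential_cone[OF xstar_in_B flow_in_B[OF assms]])
  moreover have "F xstar - F (x s) - L (x s) (xstar - x s) = - (residual s - L (x s) (x s - xstar))"
    using xstar_sol by (simp add: residual_def blinfun.diff_right)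
  moreover have "norm (F xstar - F (x s)) = norm (residual s)"
    using xstar_sol by (simp add: residual_def norm_minus_commute)
  ultimately show ?thesis by (metis norm_minus_cancel)
qed

lemma residual_descent:
  assumes "s \<ge> 0" "x s \<in> cball x0 (2 * \<rho>)"
  shows "inner (residual s) (L (x s) (x s - xstar)) \<ge> (1 - \<eta>) * (norm (residual s))\<^sup>2"
proof -
  define r v where "r = residual s" and "v = L (x s) (x s - xstar)"
  have "inner r (r - v) \<le> norm r * norm (r - v)" by (rule norm_cauchy_schwarz)
  also have "\<dots> \<le> norm r * (\<eta> * norm r)"
    using residual_linearization[OF assms] by (simp add: r_def v_def mult_left_mono)
  finally have "inner r (r - v) \<le> \<eta> * (norm r)\<^sup>2" by (simp add: power2_eq_square ac_simps)
  then show ?thesis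
    unfolding r_def[symmetric] v_def[symmetric]
    by (simp add: inner_diff_right power2_norm_eq_inner[symmetric] algebra_simps)
qed

lemma linearization_bound:
  assumes s: "s \<ge> 0" "x s \<in> cball x0 (2 * \<rho>)" and t: "t \<ge> 0" "x t \<in> cball x0 (2 * \<rho>)"
  shows "norm (L (x s) (x t - xstar)) \<le> (1 + \<eta>) * (norm (residual t) + 2 * norm (residual s))"
proof -
  define A B where "A = L (x s) (x t - x s)" and "B = L (x s) (x s - xstar)"
  have "norm (residual t - residual s - A) \<le> \<eta> * norm (residual t - residual s)"
    using tangential_cone[OF flow_in_B[OF t] flow_in_B[OF s]] by (simp add: A_def residual_def)
  moreover have "norm A \<le> norm (residual t - residual s) + norm (residual t - residual s - A)"
    using norm_triangle_sub[of A "residual t - residual s"] by (simp add: norm_minus_commute)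
  ultimately have "norm A \<le> norm (residual t - residual s) + \<eta> * norm (residual t - residual s)"
    by linarith
  also have "\<dots> = (1 + \<eta>) * norm (residual t - residual s)" by (simp add: algebra_simps)
  also have "\<dots> \<le> (1 + \<eta>) * (norm (residual t) + norm (residual s))"
    using eta norm_triangle_ineq4 by (intro mult_left_mono) auto
  finally have "norm A \<le> (1 + \<eta>) * (norm (residual t) + norm (residual s))" .
  moreover have "norm B \<le> (1 + \<eta>) * norm (residual s)"
    using residual_linearization[OF s] norm_triangle_sub[of B "residual s"]
    by (simp add: B_def norm_minus_commute algebra_simps)
  moreover have "L (x s) (x t - xstar) = A + B"
    by (simp add: A_def B_def blinfun.add_right[symmetric])
  ultimately show ?thesis
    using norm_triangle_ineq[of A B] by (simp add: algebra_simps)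
qed

lemma D_derivative_le:
  assumes "s \<ge> 0" "x s \<in> cball x0 (2 * \<rho>)"
  shows "inner (dxi s) (x s - xstar) \<le> - ((1 - \<eta>) * (norm (residual s))\<^sup>2)"
  using residual_descent[OF assms] by (simp add: dxi_inner)

lemma D_antimono_on:
  assumes "0 \<le> a" "a \<le> b" and ball: "\<And>s. a \<le> s \<Longrightarrow> s \<le> b \<Longrightarrow> x s \<in> cball x0 (2 * \<rho>)"
  shows "D b \<le> D a"
proof (rule nonincreasing_if_derivative_within_nonpos[OF assms(2)])
  fix s
  assume s: "a \<le> s" "s \<le> b"
  then have s0: "s \<ge> 0" using assms(1) by linarith
  show "(D has_real_derivative inner (dxi s) (x s - xstar)) (at s within {a..b})"
    using D_has_derivative[OF s0] by (rule DERIV_subset) (use assms(1) in auto)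
  have "0 \<le> (1 - \<eta>) * (norm (residual s))\<^sup>2" using eta by simp
  then show "inner (dxi s) (x s - xstar) \<le> 0"
    using D_derivative_le[OF s0 ball[OF s]] by linarith
qed

text \<open>By the tangential cone condition the derivative of \<open>\<langle>\<xi>(s), x(\<tau>) - x\<^sup>*\<rangle>\<close> is at most
  \<open>(1 + \<eta>) \<parallel>r(s)\<parallel> (\<parallel>r(\<tau>)\<parallel> + 2 \<parallel>r(s)\<parallel>)\<close>, where \<open>r\<close> is the residual, and \<open>K\<close> is chosen so
  that \<open>K D'(s) \<le> -3 (1 + \<eta>) \<parallel>r(s)\<parallel>\<^sup>2\<close> absorbs the quadratic part.\<close>

lemma xi_increment_bound:
  assumes ab: "0 \<le> a" "a \<le> b"
    and ball: "\<And>s. a \<le> s \<Longrightarrow> s \<le> b \<Longrightarrow> x s \<in> cball x0 (2 * \<rho>)"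
    and tau: "\<tau> \<ge> 0" "x \<tau> \<in> cball x0 (2 * \<rho>)"
    and rc: "\<And>s. a \<le> s \<Longrightarrow> s \<le> b \<Longrightarrow>
               norm (residual \<tau>) * norm (residual s) \<le> (norm (residual s))\<^sup>2 + c"
  shows "\<bar>inner (\<xi> b - \<xi> a) (x \<tau> - xstar)\<bar> \<le> K * (D a - D b) + (1 + \<eta>) * c * (b - a)"
proof -
  define w where "w = x \<tau> - xstar"
  have "\<bar>inner (\<xi> b) w - inner (\<xi> a) w\<bar>
      \<le> (K * D a - (1 + \<eta>) * c * a) - (K * D b - (1 + \<eta>) * c * b)"
  proof (rule abs_increment_le_if_derivative_dominated[OF ab(2)])
    fix s
    assume s: "a \<le> s" "s \<le> b"
    then have s0: "s \<ge> 0" and xs: "x s \<in> cball x0 (2 * \<rho>)" using ab ball by auto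
    have xi': "(\<xi> has_vector_derivative dxi s) (at s within {a..b})"
      using xi_ode[OF s0] ab by (auto simp: dxi_def residual_def intro: has_vector_derivative_within_subset)
    show "((\<lambda>s. inner (\<xi> s) w) has_real_derivative inner (dxi s) w) (at s within {a..b})"
      using bounded_linear.has_vector_derivative[OF bounded_linear_inner_left xi']
      by (simp add: has_real_derivative_iff_has_vector_derivative)
    show "((\<lambda>s. K * D s - (1 + \<eta>) * c * s) has_real_derivative
        K * inner (dxi s) (x s - xstar) - (1 + \<eta>) * c * 1) (at s within {a..b})"
      using D_has_derivative[OF s0] ab
      by (intro DERIV_diff DERIV_cmult DERIV_ident) (auto intro: DERIV_subset)
    have "\<bar>inner (dxi s) w\<bar> \<le> norm (residual s) * norm (L (x s) w)"
      using Cauchy_Schwarz_ineq2 by (simp add: dxi_inner)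
    also have "\<dots> \<le> norm (residual s) * ((1 + \<eta>) * (norm (residual \<tau>) + 2 * norm (residual s)))"
      using linearization_bound[OF s0 xs tau] by (simp add: w_def mult_left_mono)
    also have "\<dots> = (1 + \<eta>) * (norm (residual \<tau>) * norm (residual s) + 2 * (norm (residual s))\<^sup>2)"
      by (simp add: algebra_simps power2_eq_square)
    also have "\<dots> \<le> (1 + \<eta>) * (3 * (norm (residual s))\<^sup>2 + c)"
      using rc[OF s] eta by (intro mult_left_mono) auto
    also have "\<dots> = 3 * (1 + \<eta>) * (norm (residual s))\<^sup>2 + (1 + \<eta>) * c"
      by (simp add: algebra_simps)
    also have "\<dots> \<le> - (K * inner (dxi s) (x s - xstar) - (1 + \<eta>) * c * 1)"
    proof -
      have "K * inner (dxi s) (x s - xstar) \<le> - (K * (1 - \<eta>) * (norm (residual s))\<^sup>2)"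
        using mult_left_mono[OF D_derivative_le[OF s0 xs] K_nonneg] by (simp add: mult.assoc)
      then show ?thesis using K_eq by simp
    qed
    finally show "\<bar>inner (dxi s) w\<bar> \<le> - (K * inner (dxi s) (x s - xstar) - (1 + \<eta>) * c * 1)" .
  qed
  then show ?thesis by (simp add: w_def inner_diff_left algebra_simps)
qed

lemma residual_norm_continuous_on:
  assumes "0 \<le> a" and ball: "\<And>s. a \<le> s \<Longrightarrow> s \<le> b \<Longrightarrow> x s \<in> cball x0 (2 * \<rho>)"
  shows "continuous_on {a..b} (\<lambda>t. norm (residual t))"
proof -
  have "continuous_on {a..b} (\<lambda>t. F (x t))"
    by (rule continuous_on_compose2[OF F_cont continuous_on_subset[OF x_continuous]])
      (use assms ball_DF in auto)
  then show ?thesis unfolding residual_def by (intro continuous_intros)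
qed

text \<open>If the residual is minimal at an endpoint, \<open>c = 0\<close> is admissible in
  \<open>xi_increment_bound\<close>.\<close>

lemma x_dist_if_endpoint_min_residual:
  assumes ab: "0 \<le> a" "a \<le> b" and ball: "\<And>u. a \<le> u \<Longrightarrow> u \<le> b \<Longrightarrow> x u \<in> cball x0 (2 * \<rho>)"
    and tau: "\<tau> = a \<or> \<tau> = b"
    and min: "\<And>u. a \<le> u \<Longrightarrow> u \<le> b \<Longrightarrow> norm (residual \<tau>) \<le> norm (residual u)"
  shows "c0 * norm (x a - x b) powr p \<le> (1 + K) * (D a - D b)"
proof -
  have rc: "norm (residual \<tau>) * norm (residual u) \<le> (norm (residual u))\<^sup>2 + 0"
    if "a \<le> u" "u \<le> b" for u
    using mult_right_mono[OF min[OF that] norm_ge_zero] by (simp add: power2_eq_square)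
  have "\<tau> \<ge> 0" "x \<tau> \<in> cball x0 (2 * \<rho>)" using tau ab ball by auto
  from xi_increment_bound[OF ab ball this rc]
  have incr: "\<bar>inner (\<xi> b - \<xi> a) (x \<tau> - xstar)\<bar> \<le> K * (D a - D b)" by simp
  have D_ab: "0 \<le> D a - D b" using D_antimono_on[OF ab ball] by simp
  from tau show ?thesis
  proof
    assume "\<tau> = b"
    then have "c0 * norm (x a - x b) powr p \<le> (D a - D b) + K * (D a - D b)"
      using three_point[of a b] ab incr by simp
    then show ?thesis by (simp add: algebra_simps)
  next
    assume "\<tau> = a"
    then have "c0 * norm (x b - x a) powr p \<le> D b - D a + inner (\<xi> a - \<xi> b) (x a - xstar)"
      using three_point[of b a] ab by simp
    also have "\<dots> \<le> (D a - D b) + K * (D a - D b)"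
      using incr D_ab \<open>\<tau> = a\<close> by (simp add: inner_diff_left abs_le_iff)
    finally show ?thesis by (simp add: norm_minus_commute algebra_simps)
  qed
qed

lemma x_dist_bound:
  assumes ts: "0 \<le> t" "t \<le> s" and ball: "\<And>u. t \<le> u \<Longrightarrow> u \<le> s \<Longrightarrow> x u \<in> cball x0 (2 * \<rho>)"
  shows "norm (x t - x s) \<le> 2 * ((1 + K) * (D t - D s) / c0) powr (1 / p)"
proof -
  obtain \<tau> where "\<tau> \<in> {t..s}" and "\<forall>u\<in>{t..s}. norm (residual \<tau>) \<le> norm (residual u)"
    using continuous_attains_inf[OF compact_Icc _ residual_norm_continuous_on[of t s, OF ts(1) ball]]
      ts by auto
  then have tau: "t \<le> \<tau>" "\<tau> \<le> s"
    and min: "\<And>u. t \<le> u \<Longrightarrow> u \<le> s \<Longrightarrow> norm (residual \<tau>) \<le> norm (residual u)"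
    by auto
  have D_tau: "D \<tau> \<le> D t" "D s \<le> D \<tau>"
    using D_antimono_on[of t \<tau>] D_antimono_on[of \<tau> s] ts tau ball by auto
  have "c0 * norm (x t - x \<tau>) powr p \<le> (1 + K) * (D t - D \<tau>)"
    by (rule x_dist_if_endpoint_min_residual[where \<tau> = \<tau>]) (use ts tau ball min in auto)
  also have "\<dots> \<le> (1 + K) * (D t - D s)"
    using D_tau K_nonneg by (intro mult_left_mono) auto
  finally have t_tau: "norm (x t - x \<tau>) \<le> ((1 + K) * (D t - D s) / c0) powr (1 / p)"
    using c0_pos p_gt_1 by (intro powr_bound_imp_le_root) auto
  have "c0 * norm (x \<tau> - x s) powr p \<le> (1 + K) * (D \<tau> - D s)"
    by (rule x_dist_if_endpoint_min_residual[where \<tau> = \<tau>]) (use ts tau ball min in auto)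
  also have "\<dots> \<le> (1 + K) * (D t - D s)"
    using D_tau K_nonneg by (intro mult_left_mono) auto
  finally have tau_s: "norm (x \<tau> - x s) \<le> ((1 + K) * (D t - D s) / c0) powr (1 / p)"
    using c0_pos p_gt_1 by (intro powr_bound_imp_le_root) auto
  show ?thesis
    using norm_triangle_ineq[of "x t - x \<tau>" "x \<tau> - x s"] t_tau tau_s by simp
qed

lemma x_in_open_ball:
  assumes t: "t \<ge> 0" and ball: "\<And>s. 0 \<le> s \<Longrightarrow> s \<le> t \<Longrightarrow> x s \<in> cball x0 (2 * \<rho>)"
  shows "x t \<in> ball x0 (2 * \<rho>)"
proof (cases "D t < D 0")
  case True
  then have "c0 * norm (x t - xstar) powr p < c0 * \<rho> powr p"
    using D_lower[OF t] D_initial by linarith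
  then have "norm (x t - xstar) < \<rho>"
    using c0_pos p_gt_1 rho_pos powr_mono2[of p \<rho> "norm (x t - xstar)"] by force
  moreover have "dist x0 (x t) \<le> dist x0 xstar + dist (x t) xstar" by (rule dist_triangle2)
  ultimately show ?thesis using x0_near_xstar by (simp add: dist_norm)
next
  case False
  then have "D t = D 0" using D_antimono_on[OF order_refl t ball] by linarith
  then have "norm (x 0 - x t) \<le> 0"
    using x_dist_bound[OF order_refl t ball] p_gt_1 by simp
  then show ?thesis using init rho_pos by simp
qed

text \<open>At the first time \<open>x\<close> reaches the sphere it has stayed in the closed ball so far,
  so by \<open>x_in_open_ball\<close> it is strictly inside.\<close>

lemma x_in_ball:
  assumes t1: "t1 \<ge> 0"
  shows "x t1 \<in> cball x0 (2 * \<rho>)"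
proof (rule ccontr)
  define \<phi> where "\<phi> s = dist x0 (x s)" for s
  define E where "E = {s \<in> {0..t1}. 2 * \<rho> \<le> \<phi> s}"
  define ts where "ts = Inf E"
  assume "x t1 \<notin> cball x0 (2 * \<rho>)"
  then have "t1 \<in> E" using t1 by (simp add: E_def \<phi>_def)
  have \<phi>_cont: "continuous_on {0..t1} \<phi>"
    unfolding \<phi>_def by (intro continuous_intros continuous_on_subset[OF x_continuous]) auto
  have "closed E"
    unfolding E_def by (rule continuous_on_closed_Collect_le[OF continuous_on_const \<phi>_cont]) simp
  then have "ts \<in> E"
    unfolding ts_def using \<open>t1 \<in> E\<close> by (intro closed_contains_Inf) (auto simp: E_def bdd_below_def)
  then have ts: "0 \<le> ts" "ts \<le> t1" "2 * \<rho> \<le> \<phi> ts" by (auto simp: E_def)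
  have before: "\<phi> s < 2 * \<rho>" if "0 \<le> s" "s < ts" for s
  proof (rule ccontr)
    assume "\<not> \<phi> s < 2 * \<rho>"
    then have "s \<in> E" using that ts by (simp add: E_def)
    then have "ts \<le> s" unfolding ts_def by (intro cInf_lower) (auto simp: E_def bdd_below_def)
    then show False using that by simp
  qed
  obtain s where s: "0 \<le> s" "s \<le> ts" "\<phi> s = 2 * \<rho>"
    using IVT'[of \<phi> 0 "2 * \<rho>" ts] ts rho_pos init continuous_on_subset[OF \<phi>_cont, of "{0..ts}"]
    by (auto simp: \<phi>_def)
  then have "\<phi> ts = 2 * \<rho>" using before[of s] by (cases "s = ts") auto
  then have "\<phi> u \<le> 2 * \<rho>" if "0 \<le> u" "u \<le> ts" for u
    using before[of u] that by (cases "u = ts") auto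
  then have "x ts \<in> ball x0 (2 * \<rho>)"
    using x_in_open_ball[OF ts(1)] by (simp add: \<phi>_def)
  then show False using \<open>\<phi> ts = 2 * \<rho>\<close> by (simp add: \<phi>_def)
qed

lemma D_antimono: "0 \<le> a \<Longrightarrow> a \<le> b \<Longrightarrow> D b \<le> D a"
  using D_antimono_on x_in_ball by force

lemma D_eventually_flat:
  assumes "e > 0"
  obtains T where "T \<ge> 0" "\<And>s. T \<le> s \<Longrightarrow> D T - D s < e"
proof -
  have bdd: "bdd_below (D ` {0..})" using D_nonneg by (auto simp: bdd_below_def)
  obtain T where T: "T \<ge> 0" "D T < Inf (D ` {0..}) + e"
    using cInf_lessD[of "D ` {0..}" "Inf (D ` {0..}) + e"] assms by auto
  have "Inf (D ` {0..}) \<le> D s" if "T \<le> s" for s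
    using that T(1) bdd by (intro cInf_lower) auto
  with T show ?thesis using that by force
qed

lemma x_cauchy:
  assumes e: "e > 0"
  shows "\<exists>T. \<forall>t\<ge>T. \<forall>s\<ge>T. dist (x t) (x s) < e"
proof -
  define \<delta> where "\<delta> = c0 * (e / 3) powr p / (1 + K)"
  have "\<delta> > 0" using e c0_pos K_nonneg by (simp add: \<delta>_def)
  then obtain T where T: "T \<ge> 0" "\<And>s. T \<le> s \<Longrightarrow> D T - D s < \<delta>"
    using D_eventually_flat by blast
  have close: "dist (x t) (x s) < e" if ts: "T \<le> t" "t \<le> s" for t s
  proof -
    have D_ts: "0 \<le> D t - D s" "D t - D s < \<delta>"
      using D_antimono[of t s] D_antimono[of T t] T(2)[of s] T(1) ts by auto
    then have "(1 + K) * (D t - D s) / c0 \<le> (e / 3) powr p"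
      using c0_pos K_nonneg by (simp add: \<delta>_def field_simps)
    then have "((1 + K) * (D t - D s) / c0) powr (1 / p) \<le> ((e / 3) powr p) powr (1 / p)"
      using D_ts c0_pos K_nonneg p_gt_1 by (intro powr_mono2) auto
    also have "\<dots> = e / 3" using e p_gt_1 by (simp add: powr_powr)
    finally show ?thesis
      using x_dist_bound[OF _ ts(2) x_in_ball] T(1) ts e by (simp add: dist_norm)
  qed
  show ?thesis
    using close dist_commute by (metis linorder_le_cases)
qed

lemma x_converges: obtains xbar where "(x \<longlongrightarrow> xbar) at_top"
  using convergent_at_top_if_cauchy[OF x_cauchy] by blast

lemma D_plus_log_antimono:
  assumes T: "T > 0" "T \<le> b"
    and big: "\<And>s. T \<le> s \<Longrightarrow> s \<le> b \<Longrightarrow> 1 < s * (norm (residual s))\<^sup>2"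
  shows "D b + (1 - \<eta>) * ln b \<le> D T + (1 - \<eta>) * ln T"
proof (rule nonincreasing_if_derivative_within_nonpos[OF T(2), where g = "\<lambda>s. D s + (1 - \<eta>) * ln s"])
  fix s
  assume s: "T \<le> s" "s \<le> b"
  then have s0: "s > 0" using T by linarith
  have "(D has_real_derivative inner (dxi s) (x s - xstar)) (at s within {T..b})"
    using D_has_derivative[OF less_imp_le[OF s0]] by (rule DERIV_subset) (use T in auto)
  moreover have "(ln has_real_derivative 1 / s) (at s within {T..b})"
    using DERIV_ln_divide[OF s0] by (rule DERIV_subset) auto
  ultimately show "((\<lambda>s. D s + (1 - \<eta>) * ln s) has_real_derivative
      inner (dxi s) (x s - xstar) + (1 - \<eta>) * (1 / s)) (at s within {T..b})"
    by (intro DERIV_add DERIV_cmult)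
  have "1 / s \<le> (norm (residual s))\<^sup>2"
    using big[OF s] s0 by (simp add: field_simps)
  then have "(1 - \<eta>) * (1 / s) \<le> (1 - \<eta>) * (norm (residual s))\<^sup>2"
    using eta by (intro mult_left_mono) auto
  then show "inner (dxi s) (x s - xstar) + (1 - \<eta>) * (1 / s) \<le> 0"
    using D_derivative_le[OF less_imp_le[OF s0] x_in_ball[OF less_imp_le[OF s0]]] by linarith
qed

text \<open>As \<open>D \<ge> 0\<close>, the function \<open>D(t) + (1 - \<eta>) ln t\<close> cannot be nonincreasing on all of
  \<open>[T, \<infinity>)\<close>.\<close>

lemma small_residual_times:
  assumes T: "T \<ge> 1"
  shows "\<exists>\<tau>\<ge>T. \<tau> * (norm (residual \<tau>))\<^sup>2 \<le> 1"
proof (rule ccontr)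
  assume "\<not> ?thesis"
  then have big: "\<And>\<tau>. \<tau> \<ge> T \<Longrightarrow> 1 < \<tau> * (norm (residual \<tau>))\<^sup>2" by force
  define b where "b = T * exp ((D T + 1) / (1 - \<eta>))"
  have "exp ((D T + 1) / (1 - \<eta>)) \<ge> 1"
    using D_nonneg[of T] T eta by simp
  then have bT: "b \<ge> T" using T by (simp add: b_def)
  have "ln b = ln T + (D T + 1) / (1 - \<eta>)"
    using T by (simp add: b_def ln_mult)
  moreover have "(1 - \<eta>) * ((D T + 1) / (1 - \<eta>)) = D T + 1" using eta by simp
  ultimately have "(1 - \<eta>) * ln b = (1 - \<eta>) * ln T + (D T + 1)"
    by (simp add: distrib_left)
  then have "D b \<le> -1" using D_plus_log_antimono[of T b] T bT big by simp
  then show False using D_nonneg[of b] bT T by simp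
qed

lemma xi_drift_at_small_residual:
  assumes t: "\<tau> \<ge> 0" and small: "\<tau> * (norm (residual \<tau>))\<^sup>2 \<le> 1"
  shows "inner (\<xi> \<tau> - \<xi> 0) (x \<tau> - xstar) \<le> K * D 0 + (1 + \<eta>) / 4"
proof -
  have "\<bar>inner (\<xi> \<tau> - \<xi> 0) (x \<tau> - xstar)\<bar>
      \<le> K * (D 0 - D \<tau>) + (1 + \<eta>) * ((norm (residual \<tau>))\<^sup>2 / 4) * (\<tau> - 0)"
  proof (rule xi_increment_bound[OF order_refl t _ t x_in_ball[OF t]])
    fix s
    have "0 \<le> (norm (residual s) - norm (residual \<tau>) / 2)\<^sup>2" by simp
    then show "norm (residual \<tau>) * norm (residual s)
        \<le> (norm (residual s))\<^sup>2 + (norm (residual \<tau>))\<^sup>2 / 4"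
      by (simp add: power2_eq_square algebra_simps)
  qed (blast intro: x_in_ball)
  also have "\<dots> = K * (D 0 - D \<tau>) + (1 + \<eta>) / 4 * (\<tau> * (norm (residual \<tau>))\<^sup>2)"
    by (simp add: algebra_simps)
  also have "\<dots> \<le> K * D 0 + (1 + \<eta>) / 4"
  proof -
    have "(1 + \<eta>) / 4 * (\<tau> * (norm (residual \<tau>))\<^sup>2) \<le> (1 + \<eta>) / 4"
      using mult_left_mono[OF small, of "(1 + \<eta>) / 4"] eta by simp
    moreover have "0 \<le> K * D \<tau>" using K_nonneg D_nonneg[OF t] by simp
    moreover have "K * (D 0 - D \<tau>) = K * D 0 - K * D \<tau>" by (simp add: right_diff_distrib)
    ultimately show ?thesis by linarith
  qed
  finally show ?thesis by linarith
qed

lemma Theta_bound_at_small_residual: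
  assumes t: "\<tau> \<ge> 0" and small: "\<tau> * (norm (residual \<tau>))\<^sup>2 \<le> 1"
  shows "\<Theta> (x \<tau>) \<le> ereal (real_of_ereal (\<Theta> xstar) + 3 * \<rho> * norm \<xi>0 + K * D 0 + (1 + \<eta>) / 4)"
proof -
  have "norm (x \<tau> - xstar) \<le> norm (x \<tau> - x0) + norm (x0 - xstar)"
    using norm_triangle_ineq[of "x \<tau> - x0" "x0 - xstar"] by simp
  also have "\<dots> \<le> 3 * \<rho>"
    using x_in_ball[OF t] x0_near_xstar by (simp add: dist_norm norm_minus_commute)
  finally have "norm \<xi>0 * norm (x \<tau> - xstar) \<le> 3 * \<rho> * norm \<xi>0"
    by (simp add: mult.commute mult_left_mono)
  then have "inner \<xi>0 (x \<tau> - xstar) \<le> 3 * \<rho> * norm \<xi>0"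
    using norm_cauchy_schwarz[of \<xi>0 "x \<tau> - xstar"] by linarith
  moreover have "\<Theta> (x \<tau>) = ereal (real_of_ereal (\<Theta> xstar) - D \<tau>
      + inner \<xi>0 (x \<tau> - xstar) + inner (\<xi> \<tau> - \<xi> 0) (x \<tau> - xstar))"
    using flow_value[OF t] init by (simp add: D_def inner_diff_left inner_diff_right)
  ultimately show ?thesis
    using xi_drift_at_small_residual[OF t small] D_nonneg[OF t] by simp
qed

lemma small_residual_sequence:
  obtains \<tau> where "\<And>n. real n \<le> \<tau> n" "\<And>n. \<tau> n * (norm (residual (\<tau> n)))\<^sup>2 \<le> 1"
    "(\<lambda>n. residual (\<tau> n)) \<longlonglongrightarrow> 0"
proof -
  have "\<exists>\<tau>\<ge>real n + 1. \<tau> * (norm (residual \<tau>))\<^sup>2 \<le> 1" for n :: nat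
    by (rule small_residual_times) simp
  then obtain \<tau> where \<tau>: "\<And>n. \<tau> n \<ge> real n + 1" "\<And>n. \<tau> n * (norm (residual (\<tau> n)))\<^sup>2 \<le> 1"
    by metis
  have "(norm (residual (\<tau> n)))\<^sup>2 \<le> 1 / (real n + 1)" for n
  proof -
    have "(norm (residual (\<tau> n)))\<^sup>2 \<le> 1 / \<tau> n"
      using \<tau>(2)[of n] \<tau>(1)[of n] by (simp add: field_simps)
    also have "\<dots> \<le> 1 / (real n + 1)" using \<tau>(1)[of n] by (simp add: frac_le)
    finally show ?thesis .
  qed
  then have "\<forall>\<^sub>F n in sequentially. norm (residual (\<tau> n)) \<le> sqrt (1 / (real n + 1))"
    by (simp add: real_le_rsqrt)
  moreover have "(\<lambda>n. sqrt (1 / (real n + 1))) \<longlonglongrightarrow> 0"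
    using tendsto_real_sqrt[OF LIMSEQ_inverse_real_of_nat]
    by (simp add: inverse_eq_divide add.commute)
  ultimately have "(\<lambda>n. residual (\<tau> n)) \<longlonglongrightarrow> 0" by (rule Lim_null_comparison)
  moreover have "real n \<le> \<tau> n" for n using \<tau>(1)[of n] by linarith
  ultimately show ?thesis using that \<tau>(2) by blast
qed

lemma flow_limit_solution:
  assumes lim: "(x \<longlongrightarrow> xbar) at_top"
  shows "xbar \<in> cball x0 (2 * \<rho>) \<inter> edom \<Theta>" and "F xbar = y"
proof -
  obtain \<tau> where \<tau>n: "\<And>n. real n \<le> \<tau> n" and small: "\<And>n. \<tau> n * (norm (residual (\<tau> n)))\<^sup>2 \<le> 1"
    and res: "(\<lambda>n. residual (\<tau> n)) \<longlonglongrightarrow> 0"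
    using small_residual_sequence by blast
  have \<tau>0: "\<tau> n \<ge> 0" for n using \<tau>n[of n] by linarith
  have x\<tau>_ball: "x (\<tau> n) \<in> cball x0 (2 * \<rho>)" for n by (rule x_in_ball[OF \<tau>0])
  have "filterlim \<tau> at_top sequentially"
    by (rule filterlim_at_top_mono[OF filterlim_real_sequentially]) (simp add: \<tau>n)
  then have x\<tau>: "(\<lambda>n. x (\<tau> n)) \<longlonglongrightarrow> xbar" by (rule filterlim_compose[OF lim])
  have ball: "xbar \<in> cball x0 (2 * \<rho>)"
    by (rule Lim_in_closed_set[OF closed_cball always_eventually trivial_limit_sequentially x\<tau>])
      (use x\<tau>_ball in blast)
  have "(\<lambda>n. residual (\<tau> n) + y) \<longlonglongrightarrow> 0 + y" by (intro tendsto_add res tendsto_const)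
  then have "(\<lambda>n. F (x (\<tau> n))) \<longlonglongrightarrow> y" by (simp add: residual_def)
  moreover have "(\<lambda>n. F (x (\<tau> n))) \<longlonglongrightarrow> F xbar"
    using ball_DF ball x\<tau>_ball
    by (intro continuous_on_tendsto_compose[OF F_cont x\<tau>]) (auto simp: subset_iff)
  ultimately show "F xbar = y" by (rule LIMSEQ_unique[symmetric])
  have "\<Theta> xbar \<le> liminf (\<lambda>n. \<Theta> (x (\<tau> n)))"
    using lsc weak_conv_if_tendsto[OF x\<tau>] unfolding weakly_lsc_def by blast
  also have "\<dots> \<le> ereal (real_of_ereal (\<Theta> xstar) + 3 * \<rho> * norm \<xi>0 + K * D 0 + (1 + \<eta>) / 4)"
    using Theta_bound_at_small_residual[OF \<tau>0 small]
    by (intro Liminf_le trivial_limit_sequentially) simp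
  finally show "xbar \<in> cball x0 (2 * \<rho>) \<inter> edom \<Theta>"
    using ball by (auto simp: edom_def)
qed

end

theorem theorem3p5:
  fixes \<Theta> :: "'x::{real_inner,complete_space} \<Rightarrow> ereal"
    and F :: "'x \<Rightarrow> 'y::{real_inner,complete_space}"
    and DF :: "'x set" and y :: 'y
    and p c0 \<rho> \<eta> C0 :: real and x0 \<xi>0 xstar :: 'x
    and L :: "'x \<Rightarrow> ('x \<Rightarrow>\<^sub>L 'y)"
    and \<xi> x :: "real \<Rightarrow> 'x"
  assumes a_proper: "proper_fun \<Theta>"
    and a_wlsc: "weakly_lsc \<Theta>"
    and a_p: "p > 1" and a_c0: "c0 > 0"
    and a_pconv: "p_convex \<Theta> p c0"
    and b_rho: "\<rho> > 0"
    and b_xi0: "\<xi>0 \<in> subdiff \<Theta> x0"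
    and b_ball: "cball x0 (2 * \<rho>) \<subseteq> DF"
    and b_sol: "xstar \<in> DF" "xstar \<in> edom \<Theta>" "F xstar = y"
    and b_breg: "bregman \<Theta> \<xi>0 xstar x0 \<le> c0 * \<rho> powr p"
    and c_cont: "continuous_on DF F"
    and c_wclosed: "weakly_closed_op DF F"
    and d_Lcont: "continuous_on (cball x0 (2 * \<rho>) \<inter> edom \<Theta>) L"
    and d_eta: "0 \<le> \<eta>" "\<eta> < 1"
    and d_tcc: "\<And>x' xb. x' \<in> cball x0 (2 * \<rho>) \<inter> edom \<Theta> \<Longrightarrow>
                  xb \<in> cball x0 (2 * \<rho>) \<inter> edom \<Theta> \<Longrightarrow>
                  norm (F x' - F xb - L xb (x' - xb)) \<le> \<eta> * norm (F x' - F xb)"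
    and d_C0: "C0 > 0"
    and d_bound: "\<And>x'. x' \<in> cball x0 (2 * \<rho>) \<inter> edom \<Theta> \<Longrightarrow> norm (L x') \<le> C0"
    and flow_init: "\<xi> 0 = \<xi>0" "x 0 = x0"
    and flow_eq: "\<And>t. t \<ge> 0 \<Longrightarrow>
          (\<xi> has_vector_derivative
             (- adjoint (blinfun_apply (L (x t))) (F (x t) - y))) (at t within {0..})"
    and flow_grad: "\<And>t. t \<ge> 0 \<Longrightarrow>
          ((\<lambda>\<zeta>. real_of_ereal (fconj \<Theta> \<zeta>)) has_derivative (\<lambda>h. inner (x t) h)) (at (\<xi> t))"
  shows "\<exists>xbar \<in> cball x0 (2 * \<rho>) \<inter> edom \<Theta>. F xbar = y \<and>
           ((\<lambda>T. norm (x T - xbar)) \<longlongrightarrow> 0) at_top"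
proof -
  interpret landweber_flow \<Theta> F DF y p c0 \<rho> \<eta> x0 \<xi>0 xstar L \<xi> x
    by unfold_locales (use assms in auto)
  obtain xbar where lim: "(x \<longlongrightarrow> xbar) at_top" by (rule x_converges)
  then have "((\<lambda>T. norm (x T - xbar)) \<longlongrightarrow> 0) at_top"
    by (simp add: tendsto_norm_zero_iff LIM_zero_iff)
  with flow_limit_solution[OF lim] show ?thesis by blast
qed

end
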